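(* Let $t\ge 2$. If $G$ is a stitched 2-ichromatic ordered graph whose parts have sizes $m$ and $n$, then $R_t(G)\ge 2tr+1$, where $r=\min(m,n)-1$.
   Context: An ordered graph is a graph together with a specified linear ordering of its vertex set. An ordered graph $G$ is contained in an ordered graph $H$ if there is an order-preserving injection $V(G)\to V(H)$ mapping edges to edges. An interval coloring of an ordered graph is a partition of its vertex set into independent sets each consisting of consecutive vertices (called parts); an ordered graph is 2-ichromatic if its minimum number of parts in an interval coloring is 2. A 2-ichromatic ordered graph is stitched if the four vertices consisting of the first and last vertex of each of the two parts lie in a single connected component (then the interval 2-coloring is unique). $R_t(G)$ is the minimum $N$ such that every coloring of the edges of the ordered complete graph on $N$ vertices with $t$ colors contains a monochromatic copy of $G$. *)

theory Defs
  imports Main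
begin

text \<open>An ordered graph on k vertices is represented by its vertex count k (vertex set
  {0..<k}, ordered by the natural order) and an edge relation E on it.\<close>

definition ordered_graph :: "nat \<Rightarrow> (nat \<Rightarrow> nat \<Rightarrow> bool) \<Rightarrow> bool" where
  "ordered_graph k E \<longleftrightarrow>
     (\<forall>i j. E i j \<longrightarrow> i < k \<and> j < k) \<and> (\<forall>i j. E i j \<longrightarrow> E j i) \<and> (\<forall>i. \<not> E i i)"

definition independent :: "(nat \<Rightarrow> nat \<Rightarrow> bool) \<Rightarrow> nat set \<Rightarrow> bool" where
  "independent E S \<longleftrightarrow> (\<forall>i\<in>S. \<forall>j\<in>S. \<not> E i j)"

definition interval_coloring :: "nat \<Rightarrow> (nat \<Rightarrow> nat \<Rightarrow> bool) \<Rightarrow> nat \<Rightarrow> (nat \<Rightarrow> nat) \<Rightarrow> bool" where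
  "interval_coloring k E q b \<longleftrightarrow>
     b 0 = 0 \<and> b q = k \<and> (\<forall>i<q. b i < b (Suc i)) \<and>
     (\<forall>i<q. independent E {b i..<b (Suc i)})"

definition ichromatic_number :: "nat \<Rightarrow> (nat \<Rightarrow> nat \<Rightarrow> bool) \<Rightarrow> nat" where
  "ichromatic_number k E = (LEAST q. \<exists>b. interval_coloring k E q b)"

definition two_ichromatic :: "nat \<Rightarrow> (nat \<Rightarrow> nat \<Rightarrow> bool) \<Rightarrow> bool" where
  "two_ichromatic k E \<longleftrightarrow> ichromatic_number k E = 2"

definition same_component :: "nat \<Rightarrow> (nat \<Rightarrow> nat \<Rightarrow> bool) \<Rightarrow> nat \<Rightarrow> nat \<Rightarrow> bool" where
  "same_component k E u v \<longleftrightarrow> (\<lambda>x y. x < k \<and> y < k \<and> E x y)\<^sup>*\<^sup>* u v"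

definition stitched :: "nat \<Rightarrow> (nat \<Rightarrow> nat \<Rightarrow> bool) \<Rightarrow> (nat \<Rightarrow> nat) \<Rightarrow> bool" where
  "stitched k E b \<longleftrightarrow> two_ichromatic k E \<and> interval_coloring k E 2 b \<and>
     (\<forall>v\<in>{b 0, b 1 - 1, b 1, b 2 - 1}. same_component k E (b 0) v)"

text \<open>Edge colorings of the ordered complete graph on {0..<N}: the edge {i,j} with i<j gets
  color c i j < t.\<close>

definition edge_coloring :: "nat \<Rightarrow> nat \<Rightarrow> (nat \<Rightarrow> nat \<Rightarrow> nat) \<Rightarrow> bool" where
  "edge_coloring N t c \<longleftrightarrow> (\<forall>i j. i < j \<and> j < N \<longrightarrow> c i j < t)"

definition mono_copy :: "nat \<Rightarrow> (nat \<Rightarrow> nat \<Rightarrow> bool) \<Rightarrow> nat \<Rightarrow> (nat \<Rightarrow> nat \<Rightarrow> nat) \<Rightarrow> bool" where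
  "mono_copy k E N c \<longleftrightarrow> (\<exists>f col. strict_mono_on {0..<k} f \<and> f ` {0..<k} \<subseteq> {0..<N} \<and>
     (\<forall>i j. i < j \<and> j < k \<and> E i j \<longrightarrow> c (f i) (f j) = col))"

definition ordered_ramsey :: "nat \<Rightarrow> nat \<Rightarrow> (nat \<Rightarrow> nat \<Rightarrow> bool) \<Rightarrow> nat" where
  "ordered_ramsey t k E = (LEAST N. \<forall>c. edge_coloring N t c \<longrightarrow> mono_copy k E N c)"

end

theory Submission
  imports Defs "HOL-Library.Ramsey"
begin

text \<open>Split the vertices 0, ..., 2tr - 1 into 2t consecutive blocks of r vertices and colour an
  edge by the pair_color of the block indices i \<le> j of its ends. In a monochromatic copy of G,
  of colour c, every edge goes from the left part to the right part, and each part has more than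
  r vertices, so the first and last vertices of the left part land in blocks i1 < i2 and those of
  the right part in blocks j1 < j2, with i2 \<le> j1. Labelling left vertices by the left_label and
  right vertices by the right_label (for c) of their blocks gives equal labels at the ends of every
  edge, hence a single label on the component joining these four vertices; but no label value
  occurs at i1 and i2 on the left and at j1 and j2 on the right.\<close>

lemma strict_mono_on_add_diff_le:
  fixes f :: "nat \<Rightarrow> nat"
  assumes "strict_mono_on {0..<k} f" and "a \<le> b" and "b < k"
  shows "f a + (b - a) \<le> f b"
  using assms(2,3)
proof (induction b)
  case 0
  then show ?case by simp
next
  case (Suc b)
  show ?case
  proof (cases "a = Suc b")
    case False
    then have "a \<le> b" and "f a + (b - a) \<le> f b"
      using Suc by simp_all
    moreover have "f b < f (Suc b)"
      using assms(1) Suc.prems by (auto simp: strict_mono_on_def)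
    ultimately show ?thesis by simp
  qed simp
qed

lemma mono_copy_imp_le: "mono_copy k E N c \<Longrightarrow> k \<le> N"
proof (cases "k = 0")
  case False
  assume "mono_copy k E N c"
  then obtain f where "strict_mono_on {0..<k} f" and "f ` {0..<k} \<subseteq> {0..<N}"
    unfolding mono_copy_def by blast
  then have "f 0 + (k - 1) \<le> f (k - 1)" and "f (k - 1) < N"
    using False strict_mono_on_add_diff_le[of k f 0 "k - 1"] by (auto simp: image_subset_iff)
  then show "k \<le> N"
    by linarith
qed simp

lemma ex_mono_copy_all_colorings:
  assumes "t \<ge> 1"
  shows "\<exists>N. \<forall>c. edge_coloring N t c \<longrightarrow> mono_copy k E N c"
proof -
  obtain N :: nat where N: "partn_lst {..<N} (replicate t k) 2"
    using ramsey_full[of "replicate t k" 2] by blast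
  show ?thesis
  proof (intro exI allI impI)
    fix c assume c: "edge_coloring N t c"
    define g where "g X = c (Min X) (Max X)" for X :: "nat set"
    have "g \<in> nsets {..<N} 2 \<rightarrow> {..<t}"
    proof
      fix X assume "X \<in> nsets {..<N} 2"
      then obtain x y where "X = {x, y}" "x < y" "y < N"
        by (auto simp: ordered_nsets_2_eq)
      then show "g X \<in> {..<t}"
        using c by (auto simp: g_def edge_coloring_def)
    qed
    then obtain i H where "H \<in> nsets {..<N} k" and i: "g ` nsets H 2 \<subseteq> {i}"
      using partn_lstE[OF N] by (metis length_replicate nth_replicate)
    then have H: "finite H" "card H = k" "H \<subseteq> {..<N}"
      by (auto simp: nsets_def)
    define f where "f j = sorted_list_of_set H ! j" for j
    have len: "length (sorted_list_of_set H) = k"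
      using H by simp
    have f: "strict_mono_on {0..<k} f"
      unfolding strict_mono_on_def f_def
      using sorted_wrt_nth_less[OF strict_sorted_list_of_set[of H]] len by auto
    have f_in: "f j \<in> H" if "j < k" for j
      using that len H(1) unfolding f_def by (metis nth_mem set_sorted_list_of_set)
    show "mono_copy k E N c"
      unfolding mono_copy_def
    proof (intro exI conjI allI impI)
      show "f ` {0..<k} \<subseteq> {0..<N}"
        using H(3) f_in by force
    next
      fix j l assume "j < l \<and> l < k \<and> E j l"
      then have "j < l" "l < k" by auto
      then have jl: "f j < f l"
        using f by (simp add: strict_mono_on_def)
      then have "{f j, f l} \<in> nsets H 2"
        using f_in \<open>j < l\<close> \<open>l < k\<close> by simp
      then have "g {f j, f l} = i"
        using i by blast
      then show "c (f j) (f l) = i"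
        using jl by (simp add: g_def)
    qed (fact f)
  qed
qed

lemma ordered_ramsey_gt:
  assumes "t \<ge> 1"
    and "\<And>N. N \<le> M \<Longrightarrow> \<exists>c. edge_coloring N t c \<and> \<not> mono_copy k E N c"
  shows "M < ordered_ramsey t k E"
proof -
  let ?P = "\<lambda>N. \<forall>c. edge_coloring N t c \<longrightarrow> mono_copy k E N c"
  have "?P (Least ?P)"
    using ex_mono_copy_all_colorings[OF assms(1)] by (rule LeastI_ex)
  then show ?thesis
    using assms(2) unfolding ordered_ramsey_def by (meson not_le)
qed

lemma interval_2_coloringD:
  assumes "interval_coloring k E 2 b"
  shows "b 0 = 0" "b 2 = k" "b 0 < b 1" "b 1 < b 2"
    and "independent E {0..<b 1}" "independent E {b 1..<k}"
proof -
  have "b 0 = 0" "b 2 = k" and parts: "\<forall>i<2. b i < b (Suc i) \<and> independent E {b i..<b (Suc i)}"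
    using assms by (simp_all add: interval_coloring_def)
  then show "b 0 = 0" "b 2 = k" "b 0 < b 1" "b 1 < b 2"
    and "independent E {0..<b 1}" "independent E {b 1..<k}"
    using parts[rule_format, of 0] parts[rule_format, of 1] by (simp_all add: numeral_2_eq_2)
qed

lemma interval_2_coloring_edge_crosses:
  assumes "interval_coloring k E 2 b" and "E x y" and "x < y" and "y < k"
  shows "x < b 1 \<and> b 1 \<le> y"
proof -
  have "x \<in> {0..<b 1} \<and> y \<in> {0..<b 1}" if "y < b 1"
    using that assms(3) by auto
  moreover have "x \<in> {b 1..<k} \<and> y \<in> {b 1..<k}" if "b 1 \<le> x"
    using that assms(3,4) by auto
  ultimately show ?thesis
    using assms(2) interval_2_coloringD[OF assms(1)] unfolding independent_def by (meson not_le)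
qed

lemma same_component_invariant:
  assumes "\<And>x y. x < k \<Longrightarrow> y < k \<Longrightarrow> E x y \<Longrightarrow> g x = g y"
    and "same_component k E u v"
  shows "g v = g u"
  using assms(2) unfolding same_component_def
  by (induction rule: rtranclp_induct) (auto dest: assms(1))

lemma stitched_corners_invariant:
  assumes G: "ordered_graph k E" and "stitched k E b"
    and edge: "\<And>x y. E x y \<Longrightarrow> x < y \<Longrightarrow> y < k \<Longrightarrow> g x = g y"
  shows "g (b 1 - 1) = g 0" "g (b 1) = g 0" "g (k - 1) = g 0"
proof -
  have inv: "g x = g y" if "x < k" "y < k" "E x y" for x y
  proof -
    have "E y x" "x \<noteq> y"
      using G \<open>E x y\<close> by (auto simp: ordered_graph_def)
    then show ?thesis
      using that edge by (metis linorder_neqE_nat)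
  qed
  have "b 0 = 0" "b 2 = k"
    using \<open>stitched k E b\<close> interval_2_coloringD(1,2) unfolding stitched_def by blast+
  then have conn: "same_component k E 0 v" if "v \<in> {b 1 - 1, b 1, k - 1}" for v
    using \<open>stitched k E b\<close> that unfolding stitched_def by auto
  show "g (b 1 - 1) = g 0" "g (b 1) = g 0" "g (k - 1) = g 0"
    by (rule same_component_invariant[OF inv conn]; simp)+
qed

definition pair_color :: "nat \<Rightarrow> nat \<Rightarrow> nat \<Rightarrow> nat" where
  "pair_color t i j =
     (if i + j + 1 < 2*t then i
      else if i + j + 1 > 2*t then 2*t - 1 - j
      else min (i + 1) (t - 1))"

text \<open>The values 4 + 2i and 5 + 2j belong to a single block and side, so a left and a right
  block can only share the labels 1, 2 and 3.\<close>

definition left_label :: "nat \<Rightarrow> nat \<Rightarrow> nat \<Rightarrow> nat" where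
  "left_label t c i =
     (if i = c then 1
      else if c < i \<and> i + c + 1 \<le> 2*t then (if c + 1 = t then 1 else 2)
      else if i + 1 = c then 3
      else 4 + 2*i)"

definition right_label :: "nat \<Rightarrow> nat \<Rightarrow> nat \<Rightarrow> nat" where
  "right_label t c j =
     (if c \<le> j \<and> j + c + 1 < 2*t then 1
      else if j + c + 1 = 2*t then (if c + 1 = t then 1 else 2)
      else if j + c = 2*t then 3
      else 5 + 2*j)"

lemma pair_color_less: "i \<le> j \<Longrightarrow> j < 2*t \<Longrightarrow> pair_color t i j < t"
  unfolding pair_color_def by auto

lemma left_label_pair_color:
  assumes "i \<le> j" and "j < 2*t"
  shows "left_label t (pair_color t i j) i = right_label t (pair_color t i j) j"
proof -
  consider "i + j + 1 < 2*t" | "i + j + 1 > 2*t" | "i + j + 1 = 2*t" "i + 1 < t"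
    | "i = t - 1" "j = t" "0 < t"
    using assms by linarith
  then show ?thesis
  proof cases
    case 1
    with assms show ?thesis by (simp add: pair_color_def left_label_def right_label_def)
  next
    case 2
    define c where "c = 2*t - 1 - j"
    have "pair_color t i j = c"
      using 2 by (simp add: pair_color_def c_def)
    moreover have "c < i" "i + c + 1 \<le> 2*t" "j + c + 1 = 2*t"
      using 2 assms by (auto simp: c_def)
    ultimately show ?thesis
      by (simp add: left_label_def right_label_def)
  next
    case 3
    then show ?thesis by (simp add: pair_color_def left_label_def right_label_def)
  next
    case 4
    then show ?thesis by (cases t) (simp_all add: pair_color_def left_label_def right_label_def)
  qed
qed

lemma left_label_shared:
  assumes "left_label t c i = right_label t c j"
  shows "left_label t c i \<in> {1, 2, 3}"
proof -
  have "left_label t c i \<in> {1, 2, 3} \<or> even (left_label t c i)"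
    unfolding left_label_def by auto
  moreover have "right_label t c j \<in> {1, 2, 3} \<or> odd (right_label t c j)"
    unfolding right_label_def by auto
  ultimately show ?thesis
    using assms by auto
qed

lemma left_label_eq_1D:
  "left_label t c i = 1 \<Longrightarrow> i = c \<or> (c < i \<and> i + c + 1 \<le> 2*t \<and> c + 1 = t)"
  unfolding left_label_def by (auto split: if_split_asm)

lemma left_label_eq_3D: "left_label t c i = 3 \<Longrightarrow> i + 1 = c"
  unfolding left_label_def by (auto split: if_split_asm)

lemma right_label_eq_1D:
  "right_label t c j = 1 \<Longrightarrow> (c \<le> j \<and> j + c + 1 < 2*t) \<or> (j + c + 1 = 2*t \<and> c + 1 = t)"
  unfolding right_label_def by (auto split: if_split_asm)

lemma right_label_eq_2D: "right_label t c j = 2 \<Longrightarrow> j + c + 1 = 2*t"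
  unfolding right_label_def by (auto split: if_split_asm)

lemma labels_not_interleaved:
  assumes "i1 < i2" and "i2 \<le> j1" and "j1 < j2"
    and "left_label t c i1 = v" and "left_label t c i2 = v"
    and "right_label t c j1 = v" and "right_label t c j2 = v"
  shows False
proof -
  have "v \<in> {1, 2, 3}"
    using left_label_shared[of t c i1 j1] assms by auto
  then consider "v = 1" | "v = 2" | "v = 3" by auto
  then show False
  proof cases
    case 1
    with assms show False
      using left_label_eq_1D[of t c i1] left_label_eq_1D[of t c i2] right_label_eq_1D[of t c j2]
      by auto
  next
    case 2
    with assms show False
      using right_label_eq_2D[of t c j1] right_label_eq_2D[of t c j2] by auto
  next
    case 3
    with assms show False
      using left_label_eq_3D[of t c i1] left_label_eq_3D[of t c i2] by auto
  qed
qed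

definition block_coloring :: "nat \<Rightarrow> nat \<Rightarrow> nat \<Rightarrow> nat \<Rightarrow> nat" where
  "block_coloring t r x y = pair_color t (x div r) (y div r)"

lemma block_index_le:
  fixes x y t r :: nat
  assumes "x \<le> y" and "y < 2*t*r"
  shows "x div r \<le> y div r" and "y div r < 2*t"
  using assms by (auto simp: div_le_mono less_mult_imp_div_less mult.commute)

lemma block_index_less:
  fixes x y r :: nat
  assumes "x + r \<le> y" and "0 < r"
  shows "x div r < y div r"
proof -
  have "(x + r) div r \<le> y div r"
    using assms(1) by (rule div_le_mono)
  then show ?thesis
    using assms(2) by simp
qed

lemma left_label_block_coloring:
  assumes "x \<le> y" and "y < 2*t*r"
  shows "left_label t (block_coloring t r x y) (x div r) =
    right_label t (block_coloring t r x y) (y div r)"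
  unfolding block_coloring_def using block_index_le[OF assms] by (rule left_label_pair_color)

lemma block_labels_not_interleaved:
  assumes "x1 + r \<le> x2" and "x2 \<le> y1" and "y1 + r \<le> y2" and "0 < r"
    and "left_label t c (x1 div r) = v" and "left_label t c (x2 div r) = v"
    and "right_label t c (y1 div r) = v" and "right_label t c (y2 div r) = v"
  shows False
proof (rule labels_not_interleaved)
  show "x1 div r < x2 div r" "y1 div r < y2 div r"
    using assms(1,3,4) by (simp_all add: block_index_less)
  show "x2 div r \<le> y1 div r"
    using assms(2) by (rule div_le_mono)
qed (fact assms)+

lemma edge_coloring_block_coloring:
  assumes "N \<le> 2*t*r"
  shows "edge_coloring N t (block_coloring t r)"
  unfolding edge_coloring_def block_coloring_def
proof (intro allI impI)
  fix x y assume "x < y \<and> y < N"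
  with assms have "x \<le> y" "y < 2*t*r"
    by auto
  then show "pair_color t (x div r) (y div r) < t"
    by (intro pair_color_less block_index_le)
qed

lemma not_mono_copy_block_coloring:
  assumes G: "ordered_graph k E" and "stitched k E b"
    and r: "r < b 1 - b 0" "r < b 2 - b 1" and N: "N \<le> 2*t*r"
  shows "\<not> mono_copy k E N (block_coloring t r)"
proof
  assume copy: "mono_copy k E N (block_coloring t r)"
  then obtain f c where f: "strict_mono_on {0..<k} f" "f ` {0..<k} \<subseteq> {0..<N}"
    and edges: "\<And>x y. x < y \<and> y < k \<and> E x y \<Longrightarrow> block_coloring t r (f x) (f y) = c"
    unfolding mono_copy_def by blast
  have col: "interval_coloring k E 2 b"
    using \<open>stitched k E b\<close> by (simp add: stitched_def)
  define m where "m = b 1"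
  have "b 0 = 0" "b 2 = k" "0 < m" "m < k"
    using interval_2_coloringD[OF col] unfolding m_def by auto
  have "r \<noteq> 0"
    using N mono_copy_imp_le[OF copy] \<open>m < k\<close> by (cases r) auto
  define lab where
    "lab v = (if v < m then left_label t c (f v div r) else right_label t c (f v div r))" for v
  have "lab x = lab y" if "E x y" "x < y" "y < k" for x y
  proof -
    have "x < m" "m \<le> y"
      using interval_2_coloring_edge_crosses[OF col that] m_def by auto
    moreover have "f x \<le> f y"
      using f(1) that by (simp add: strict_mono_on_def less_imp_le)
    moreover have "f y < 2*t*r"
      using f(2) that N by force
    ultimately show ?thesis
      using left_label_block_coloring[of "f x" "f y" t r] edges that by (simp add: lab_def)
  qed
  then have "lab (m - 1) = lab 0" "lab m = lab 0" "lab (k - 1) = lab 0"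
    using stitched_corners_invariant[OF G \<open>stitched k E b\<close>, of lab] unfolding m_def by blast+
  then have labels: "left_label t c (f 0 div r) = lab 0" "left_label t c (f (m - 1) div r) = lab 0"
    "right_label t c (f m div r) = lab 0" "right_label t c (f (k - 1) div r) = lab 0"
    using \<open>0 < m\<close> \<open>m < k\<close> by (simp_all add: lab_def not_less[THEN iffD2])
  have "f 0 + (m - 1) \<le> f (m - 1)" "f m + (k - 1 - m) \<le> f (k - 1)"
    using strict_mono_on_add_diff_le[OF f(1), of 0 "m - 1"]
      strict_mono_on_add_diff_le[OF f(1), of m "k - 1"] \<open>m < k\<close>
    by simp_all
  moreover have "r \<le> m - 1" "r \<le> k - 1 - m"
    using r \<open>b 0 = 0\<close> \<open>b 2 = k\<close> m_def by auto
  ultimately have "f 0 + r \<le> f (m - 1)" "f m + r \<le> f (k - 1)"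
    by linarith+
  moreover have "f (m - 1) \<le> f m"
    using strict_mono_onD[OF f(1), of "m - 1" m] \<open>0 < m\<close> \<open>m < k\<close>
    by (simp add: less_imp_diff_less)
  ultimately show False
    using block_labels_not_interleaved[OF _ _ _ _ labels] \<open>r \<noteq> 0\<close> by blast
qed

theorem corollary5p1:
  fixes t k :: nat and E :: "nat \<Rightarrow> nat \<Rightarrow> bool" and b :: "nat \<Rightarrow> nat"
  assumes "t \<ge> 2"
    and "ordered_graph k E"
    and "stitched k E b"
  shows "ordered_ramsey t k E \<ge> 2 * t * (min (b 1 - b 0) (b 2 - b 1) - 1) + 1"
proof -
  define r where "r = min (b 1 - b 0) (b 2 - b 1) - 1"
  have "b 0 < b 1" "b 1 < b 2"
    using assms(3) interval_2_coloringD(3,4) unfolding stitched_def by blast+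
  then have r: "r < b 1 - b 0" "r < b 2 - b 1"
    by (auto simp: r_def)
  have "2 * t * r < ordered_ramsey t k E"
  proof (rule ordered_ramsey_gt)
    fix N assume "N \<le> 2 * t * r"
    then show "\<exists>c. edge_coloring N t c \<and> \<not> mono_copy k E N c"
      using edge_coloring_block_coloring not_mono_copy_block_coloring[OF assms(2,3) r] by blast
  qed (use assms(1) in simp)
  then show ?thesis
    by (simp add: r_def)
qed

end
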